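(* If $C$ is a line through $O$, then $\Delta_{C,s_+}=\Delta_{1,s,1}$ for every rational $s\ge1$; hence $\Delta_{C,s_+}$ depends linearly on $s$ and there are no mutations.
   Context: Work over $\mathbb C$; $x=X/Z$, $y=Y/Z$, $O=(0,0)$; the line $C$ is taken to be tangent to (i.e. equal to) $\{y=0\}$ near $O$, parametrized as $x\mapsto(x,\xi(x))$ with $\xi=0$ after coordinates are chosen. For $f\ne0$ with $C$-expansion $f=\sum a_{ij}x^i(y-\xi(x))^j$, $v_1(C,s;f)=\min\{i+sj:a_{ij}\ne0\}$, and $v_+(C,s)(f)=(v_1(C,s;f),\min\{j:\exists i,\ a_{ij}\ne0,\ i+sj=v_1(C,s;f)\})$. $\Delta_{C,s_+}$ is the closure of the convex hull of $\{v_+(C,s)(F/Z^k)/k:k\ge1,\ F\ne0\text{ homogeneous of degree }k\}$. $\Delta_{a,b,c}$ is the triangle with vertices $(0,0),(a,0),(b,c)$. $\Delta_{C,s_+}$ depends linearly on $s$ in an interval $I$ if the number of vertices other than the origin is constant on $I$ and their coordinates are affine functions of $s$ on $I$. With $d=\deg C$, $\Delta_{C,s_+}$ is continuous at $s_0\in(1,d^2)$ if for every $\epsilon>0$ there is $\delta>0$ such that for all rational $s$ with $|s-s_0|<\delta$ every vertex of $\Delta_{C,s_+}$ is within distance $\epsilon$ of $\partial\Delta_{C,s_{0+}}$; otherwise it mutates at $s_0$. *)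

theory Defs
  imports "HOL-Analysis.Analysis"
begin

text \<open>A homogeneous polynomial F(X,Y,Z) of degree k over the complex numbers is
represented by its coefficient function c, where c i j is the coefficient of
X^i Y^j Z^(k-i-j); coefficients with i + j > k vanish.  The rational function
f = F/Z^k in the affine coordinates x = X/Z, y = Y/Z is then
f = sum of c i j x^i y^j.\<close>

definition hom_coeffs :: "nat \<Rightarrow> (nat \<Rightarrow> nat \<Rightarrow> complex) \<Rightarrow> bool" where
  "hom_coeffs k c \<longleftrightarrow> (\<forall>i j. k < i + j \<longrightarrow> c i j = 0)"

text \<open>C-expansion of f = F/Z^k for the line C = {y = 0} through O, i.e. xi = 0:
f = sum a_ij x^i (y - xi(x))^j with a_ij = c i j.\<close>

definition line_expansion :: "(nat \<Rightarrow> nat \<Rightarrow> complex) \<Rightarrow> nat \<Rightarrow> nat \<Rightarrow> complex" where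
  "line_expansion c i j = c i j"

definition v1_line :: "real \<Rightarrow> (nat \<Rightarrow> nat \<Rightarrow> complex) \<Rightarrow> real" where
  "v1_line s c = Min {real i + s * real j | i j. line_expansion c i j \<noteq> 0}"

definition vplus_line :: "real \<Rightarrow> (nat \<Rightarrow> nat \<Rightarrow> complex) \<Rightarrow> real \<times> real" where
  "vplus_line s c = (v1_line s c,
     real (Min {j. \<exists>i. line_expansion c i j \<noteq> 0 \<and> real i + s * real j = v1_line s c}))"

definition Delta_line :: "real \<Rightarrow> (real \<times> real) set" where
  "Delta_line s = closure (convex hull
     {(1 / real k) *\<^sub>R vplus_line s c | k c. k \<ge> 1 \<and> hom_coeffs k c \<and> (\<exists>i j. c i j \<noteq> 0)})"

definition Delta_abc :: "real \<Rightarrow> real \<Rightarrow> real \<Rightarrow> (real \<times> real) set" where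
  "Delta_abc a b c = convex hull {(0, 0), (a, 0), (b, c)}"

definition vertices :: "(real \<times> real) set \<Rightarrow> (real \<times> real) set" where
  "vertices K = {v. v extreme_point_of K}"

definition depends_linearly :: "(real \<Rightarrow> (real \<times> real) set) \<Rightarrow> real set \<Rightarrow> bool" where
  "depends_linearly D I \<longleftrightarrow>
     (\<exists>n::nat. \<exists>A B :: nat \<Rightarrow> real \<times> real.
        \<forall>s \<in> I \<inter> \<rat>. vertices (D s) - {(0, 0)} = {A l + s *\<^sub>R B l | l. l < n}
                      \<and> card (vertices (D s) - {(0, 0)}) = n)"

text \<open>Continuity at s0 (d = deg C): for every eps > 0 there is delta > 0 such that for
all rational s with |s - s0| < delta every vertex of Delta_s is within eps of the
boundary of Delta_{s0}.\<close>

definition continuous_at_s :: "(real \<Rightarrow> (real \<times> real) set) \<Rightarrow> real \<Rightarrow> bool" where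
  "continuous_at_s D s0 \<longleftrightarrow>
     (\<forall>\<epsilon>>0. \<exists>\<delta>>0. \<forall>s \<in> \<rat>. \<bar>s - s0\<bar> < \<delta> \<longrightarrow>
        (\<forall>v \<in> vertices (D s). \<exists>w \<in> frontier (D s0). dist v w < \<epsilon>))"

definition mutates_at :: "(real \<Rightarrow> (real \<times> real) set) \<Rightarrow> nat \<Rightarrow> real \<Rightarrow> bool" where
  "mutates_at D d s0 \<longleftrightarrow> s0 \<in> {1<..<real d ^ 2} \<and> \<not> continuous_at_s D s0"

end

theory Submission
  imports Defs
begin

text \<open>Every nonzero F/Z^k contributes a point v_+(F)/k of the form (i + s j, j)/k with
i + j \<le> k, and all such points lie in the triangle \<Delta>_{1,s,1}. Conversely its vertices are
attained by the monomials Z, X and Y, so closure and convex hull give exactly \<Delta>_{1,s,1}.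
Since s \<mapsto> (s, 1) is affine, the two nonzero vertices depend linearly on s.\<close>

lemma scaled_lattice_point_in_Delta_abc:
  fixes k i j :: nat and s :: real
  assumes "k \<ge> 1" "i + j \<le> k"
  shows "(1 / real k) *\<^sub>R (real i + s * real j, real j) \<in> Delta_abc 1 s 1"
proof -
  let ?u = "real i / real k" and ?v = "real j / real k"
  have k: "real k > 0" using assms by simp
  have "?u + ?v \<le> 1"
    using assms k by (simp add: add_divide_distrib[symmetric] divide_le_eq_1)
  moreover have "(1 / real k) *\<^sub>R (real i + s * real j, real j)
      = (1 - ?u - ?v) *\<^sub>R (0, 0) + ?u *\<^sub>R (1, 0) + ?v *\<^sub>R (s, 1)"
    by (simp add: add_divide_distrib)
  ultimately show ?thesis
    unfolding Delta_abc_def convex_hull_3 by fastforce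
qed

lemma vplus_line_attained:
  assumes "finite {(i, j). c i j \<noteq> 0}" "\<exists>i j. c i j \<noteq> 0"
  obtains i j where "c i j \<noteq> 0" "vplus_line s c = (real i + s * real j, real j)"
proof -
  let ?V = "{real i + s * real j | i j. line_expansion c i j \<noteq> 0}"
  let ?J = "{j. \<exists>i. line_expansion c i j \<noteq> 0 \<and> real i + s * real j = v1_line s c}"
  have "?V = (\<lambda>(i, j). real i + s * real j) ` {(i, j). c i j \<noteq> 0}"
    by (auto simp: line_expansion_def)
  with assms have "finite ?V" "?V \<noteq> {}" by auto
  then have "v1_line s c \<in> ?V" unfolding v1_line_def by (rule Min_in)
  then have "?J \<noteq> {}" by (force simp: line_expansion_def)
  moreover have "?J \<subseteq> snd ` {(i, j). c i j \<noteq> 0}"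
    by (force simp: line_expansion_def)
  then have "finite ?J" using assms(1) by (meson finite_imageI finite_subset)
  ultimately have "Min ?J \<in> ?J" by (intro Min_in)
  then obtain i where "c i (Min ?J) \<noteq> 0" "real i + s * real (Min ?J) = v1_line s c"
    by (auto simp: line_expansion_def)
  then show ?thesis by (intro that[of i "Min ?J"]) (simp_all add: vplus_line_def)
qed

lemma finite_support_hom_coeffs:
  assumes "hom_coeffs k c"
  shows "finite {(i, j). c i j \<noteq> 0}"
proof (rule finite_subset)
  show "{(i, j). c i j \<noteq> 0} \<subseteq> {..k} \<times> {..k}"
    using assms unfolding hom_coeffs_def
    by (auto simp: not_le[symmetric]) (metis add_leD1 add_leD2 not_le)+
qed simp

lemma vplus_line_in_Delta_abc:
  assumes "k \<ge> 1" "hom_coeffs k c" "\<exists>i j. c i j \<noteq> 0"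
  shows "(1 / real k) *\<^sub>R vplus_line s c \<in> Delta_abc 1 s 1"
proof -
  obtain i j where "c i j \<noteq> 0" and v: "vplus_line s c = (real i + s * real j, real j)"
    using vplus_line_attained[OF finite_support_hom_coeffs[OF assms(2)] assms(3)] .
  then have "i + j \<le> k" using assms(2) unfolding hom_coeffs_def by (meson not_le)
  with assms(1) show ?thesis
    unfolding v by (rule scaled_lattice_point_in_Delta_abc)
qed

lemma vplus_line_monomial:
  "vplus_line s (\<lambda>i j. if i = a \<and> j = b then 1 else 0) = (real a + s * real b, real b)"
proof -
  let ?c = "\<lambda>i j. if i = a \<and> j = b then (1::complex) else 0"
  have "{real i + s * real j | i j. line_expansion ?c i j \<noteq> 0} = {real a + s * real b}"
    by (auto simp: line_expansion_def)
  then have v: "v1_line s ?c = real a + s * real b" by (simp add: v1_line_def)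
  have "{j. \<exists>i. line_expansion ?c i j \<noteq> 0 \<and> real i + s * real j = v1_line s ?c} = {b}"
    by (auto simp: line_expansion_def v)
  then show ?thesis by (simp add: vplus_line_def v)
qed

lemma Delta_line_eq_Delta_abc: "Delta_line s = Delta_abc 1 s 1"
proof -
  let ?P = "{(1 / real k) *\<^sub>R vplus_line s c | k c.
              k \<ge> 1 \<and> hom_coeffs k c \<and> (\<exists>i j. c i j \<noteq> 0)}"
  have monomial_in_P: "(real a + s * real b, real b) \<in> ?P" if "a + b \<le> 1" for a b
  proof -
    let ?c = "\<lambda>i j. if i = a \<and> j = b then (1::complex) else 0"
    have "hom_coeffs 1 ?c" using that by (simp add: hom_coeffs_def)
    then have "(1 / real (1::nat)) *\<^sub>R vplus_line s ?c \<in> ?P" by fastforce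
    then show ?thesis by (simp add: vplus_line_monomial)
  qed
  have "convex hull ?P = Delta_abc 1 s 1"
  proof
    show "convex hull ?P \<subseteq> Delta_abc 1 s 1"
      using vplus_line_in_Delta_abc
      by (intro hull_minimal) (blast, simp add: Delta_abc_def)
    have "{(0, 0), (1, 0), (s, 1)} \<subseteq> ?P"
      using monomial_in_P[of 0 0] monomial_in_P[of 1 0] monomial_in_P[of 0 1] by simp
    then show "Delta_abc 1 s 1 \<subseteq> convex hull ?P"
      unfolding Delta_abc_def by (rule hull_mono)
  qed
  moreover have "closed (Delta_abc 1 s 1)"
    unfolding Delta_abc_def by (simp add: compact_imp_closed finite_imp_compact_convex_hull)
  ultimately show ?thesis unfolding Delta_line_def by simp
qed

lemma vertices_Delta_line: "vertices (Delta_line s) = {(0, 0), (1, 0), (s, 1)}"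
proof -
  have "\<not> collinear {0::real \<times> real, (1, 0), (s, 1)}"
    unfolding collinear_lemma by (auto simp: zero_prod_def)
  then have "\<not> affine_dependent {(0::real, 0::real), (1, 0), (s, 1)}"
    by (simp add: collinear_3_eq_affine_dependent zero_prod_def)
  then show ?thesis
    unfolding vertices_def Delta_line_eq_Delta_abc Delta_abc_def
    using extreme_point_of_convex_hull_affine_independent by blast
qed

theorem proposition5p23:
  shows "(\<forall>s \<in> \<rat>. s \<ge> 1 \<longrightarrow> Delta_line s = Delta_abc 1 s 1)
         \<and> depends_linearly Delta_line {1..}
         \<and> (\<forall>s0. \<not> mutates_at Delta_line 1 s0)"
proof (intro conjI)
  show "\<forall>s \<in> \<rat>. s \<ge> 1 \<longrightarrow> Delta_line s = Delta_abc 1 s 1"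
    using Delta_line_eq_Delta_abc by blast
  show "\<forall>s0. \<not> mutates_at Delta_line 1 s0"
    by (simp add: mutates_at_def)
  have nonzero_vertices: "vertices (Delta_line s) - {(0, 0)} = {(1, 0), (s, 1)}" for s
    unfolding vertices_Delta_line by auto
  let ?A = "\<lambda>l::nat. if l = 0 then (1, 0) else (0, 1) :: real \<times> real"
  let ?B = "\<lambda>l::nat. if l = 0 then (0, 0) else (1, 0) :: real \<times> real"
  have "{?A l + s *\<^sub>R ?B l | l. l < 2} = {(1, 0), (s, 1)}" for s
    by (auto simp: less_2_cases_iff)
  then have linear_parametrization:
    "vertices (Delta_line s) - {(0, 0)} = {?A l + s *\<^sub>R ?B l | l. l < 2}
     \<and> card (vertices (Delta_line s) - {(0, 0)}) = 2" for s
    unfolding nonzero_vertices by simp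
  show "depends_linearly Delta_line {1..}"
    unfolding depends_linearly_def
    by (intro exI[of _ "2::nat"] exI[of _ ?A] exI[of _ ?B] ballI linear_parametrization)
qed

end
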